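(* For every integer $n\ge0$: (1) $\displaystyle\sum_{k=0}^n(-1)^{n-k}\binom nk(y+1)^{n-k}\mathrm B_{k+1}(x,y)=\mathrm{Fe}_n(x)$; (2) $\displaystyle\sum_{k=0}^n(-1)^{n-k}\binom nk(y+1)^{n-k}\mathrm C_{k+1}(x,y)$ equals $x^{n/2}\mathcal C_{n/2}$ if $n$ is even and $0$ if $n$ is odd, where $\mathcal C_m=\frac1{m+1}\binom{2m}m$.
   Context: A set partition of $[n]=\{1,\dots,n\}$ is a set of nonempty pairwise disjoint sets (blocks) with union $[n]$. A pair $(i,j)$ is an arc of $\Lambda$ if $i<j$ lie in the same block and $j$ is the least element of that block greater than $i$; $\mathrm{Arc}(\Lambda)$ is the set of arcs and $\mathrm{Cov}(\Lambda)=\{(i,j)\in\mathrm{Arc}(\Lambda):j=i+1\}$. $\Lambda$ is noncrossing if there are no arcs $(i,k),(j,l)$ with $i<j<k<l$, and feasible if every block has at least two elements. $\Pi(n)$, $\mathrm{NC}(n)$ are the sets of partitions and noncrossing partitions of $[n]$. $\mathrm B_n(x,y)=\sum_{\Lambda\in\Pi(n)}x^{|\mathrm{Arc}(\Lambda)\setminus\mathrm{Cov}(\Lambda)|}y^{|\mathrm{Cov}(\Lambda)|}$, $\mathrm C_n(x,y)$ is the same sum over $\mathrm{NC}(n)$, and $\mathrm{Fe}_n(x)=\sum_{\text{feasible }\Lambda\in\Pi(n)}x^{|\mathrm{Arc}(\Lambda)|}$ (with the empty partition of $[0]$ counted, so $\mathrm{Fe}_0=1$). *)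

theory Defs
  imports Complex_Main "HOL-Library.Disjoint_Sets"
begin

definition set_partitions :: "nat \<Rightarrow> nat set set set" where
  "set_partitions n = {P. partition_on {1..n} P}"

definition arcs :: "nat set set \<Rightarrow> (nat \<times> nat) set" where
  "arcs P = {(i, j). \<exists>B\<in>P. i \<in> B \<and> j \<in> B \<and> i < j \<and> (\<forall>k\<in>B. i < k \<longrightarrow> j \<le> k)}"

definition cov :: "nat set set \<Rightarrow> (nat \<times> nat) set" where
  "cov P = {(i, j) \<in> arcs P. j = i + 1}"

definition noncrossing :: "nat set set \<Rightarrow> bool" where
  "noncrossing P \<longleftrightarrow> \<not> (\<exists>i j k l. (i, k) \<in> arcs P \<and> (j, l) \<in> arcs P \<and> i < j \<and> j < k \<and> k < l)"

definition feasible :: "nat set set \<Rightarrow> bool" where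
  "feasible P \<longleftrightarrow> (\<forall>B\<in>P. card B \<ge> 2)"

definition nc_partitions :: "nat \<Rightarrow> nat set set set" where
  "nc_partitions n = {P \<in> set_partitions n. noncrossing P}"

definition Bpoly :: "nat \<Rightarrow> real \<Rightarrow> real \<Rightarrow> real" where
  "Bpoly n x y = (\<Sum>P\<in>set_partitions n. x ^ card (arcs P - cov P) * y ^ card (cov P))"

definition Cpoly :: "nat \<Rightarrow> real \<Rightarrow> real \<Rightarrow> real" where
  "Cpoly n x y = (\<Sum>P\<in>nc_partitions n. x ^ card (arcs P - cov P) * y ^ card (cov P))"

definition Fe :: "nat \<Rightarrow> real \<Rightarrow> real" where
  "Fe n x = (\<Sum>P\<in>{P \<in> set_partitions n. feasible P}. x ^ card (arcs P))"

definition catalan :: "nat \<Rightarrow> real" where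
  "catalan m = (1 / (real m + 1)) * real ((2 * m) choose m)"

end

theory Submission
  imports Defs
begin

text \<open>
  Every partition of [n+1] arises exactly once from a partition of [n], either by adding n+1 as a
  singleton block or by appending n+1 to a block B; the latter creates the single new arc
  (max B, n+1), which is a covering arc iff max B = n. Refining the generating functions by an
  auxiliary level h turns this into the recurrence of weighted Motzkin paths with level weights
  \<alpha> h and down-step weights \<beta> h: (1 + y + x h, x (h+1)) for B_(n+1), (x h, x (h+1)) for Fe_n,
  and (1 + y, x) for C_(n+1), since a noncrossing partition may only be extended at blocks whose
  maximum lies under no arc. Adding a constant to all level weights is a binomial transform, so the
  alternating sums with y + 1 remove it, leaving Fe_n and x-weighted Dyck paths respectively; the
  latter return to height 0 with total weight x^(n/2) times a Catalan number.
\<close>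

section \<open>Weighted Motzkin paths\<close>

text \<open>Total weight of the paths of n steps from height 0 to height h in which an up step weighs 1,
  a level step at height h weighs \<alpha> h and a down step to height h weighs \<beta> h.\<close>
fun motzkin :: "(nat \<Rightarrow> real) \<Rightarrow> (nat \<Rightarrow> real) \<Rightarrow> nat \<Rightarrow> nat \<Rightarrow> real" where
  "motzkin \<alpha> \<beta> 0 h = (if h = 0 then 1 else 0)"
| "motzkin \<alpha> \<beta> (Suc n) h =
     (if h = 0 then 0 else motzkin \<alpha> \<beta> n (h - 1)) + \<alpha> h * motzkin \<alpha> \<beta> n h + \<beta> h * motzkin \<alpha> \<beta> n (Suc h)"

lemma sum_binomial_Suc:
  fixes a :: real and w :: "nat \<Rightarrow> real"
  shows "(\<Sum>k\<le>Suc n. real (Suc n choose k) * a ^ (Suc n - k) * w k)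
       = (\<Sum>k\<le>n. real (n choose k) * a ^ (n - k) * w (Suc k)) + a * (\<Sum>k\<le>n. real (n choose k) * a ^ (n - k) * w k)"
proof -
  let ?T = "\<Sum>k\<le>n. real (n choose Suc k) * a ^ (n - k) * w (Suc k)"
  have pascal: "(\<Sum>k\<le>Suc n. real (Suc n choose k) * a ^ (Suc n - k) * w k)
      = (\<Sum>k\<le>n. real (n choose k) * a ^ (n - k) * w (Suc k)) + (a ^ Suc n * w 0 + ?T)"
    by (simp only: sum.atMost_Suc_shift binomial_Suc_Suc diff_Suc_Suc of_nat_add distrib_right sum.distrib)
      (simp add: add_ac)
  have "a ^ Suc n * w 0 + ?T = (\<Sum>k\<le>Suc n. real (n choose k) * a ^ (Suc n - k) * w k)"
    by (subst sum.atMost_Suc_shift) simp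
  also have "\<dots> = a * (\<Sum>k\<le>n. real (n choose k) * a ^ (n - k) * w k)"
    by (simp add: sum_distrib_left Suc_diff_le mult_ac)
  finally show ?thesis
    using pascal by simp
qed

lemma motzkin_shift:
  "motzkin (\<lambda>h. \<alpha> h + a) \<beta> n h = (\<Sum>k\<le>n. real (n choose k) * a ^ (n - k) * motzkin \<alpha> \<beta> k h)"
proof (induction n arbitrary: h)
  case 0
  then show ?case by simp
next
  case (Suc n)
  let ?S = "\<lambda>f. \<Sum>k\<le>n. real (n choose k) * a ^ (n - k) * f k"
  let ?step = "\<lambda>k. (if h = 0 then 0 else motzkin \<alpha> \<beta> k (h - 1)) + \<alpha> h * motzkin \<alpha> \<beta> k h
                   + \<beta> h * motzkin \<alpha> \<beta> k (Suc h)"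
  have "motzkin (\<lambda>h. \<alpha> h + a) \<beta> (Suc n) h
      = (if h = 0 then 0 else ?S (\<lambda>k. motzkin \<alpha> \<beta> k (h - 1))) + \<alpha> h * ?S (\<lambda>k. motzkin \<alpha> \<beta> k h)
        + \<beta> h * ?S (\<lambda>k. motzkin \<alpha> \<beta> k (Suc h)) + a * ?S (\<lambda>k. motzkin \<alpha> \<beta> k h)"
    by (simp only: motzkin.simps Suc.IH) (simp add: algebra_simps)
  also have "\<dots> = ?S ?step + a * ?S (\<lambda>k. motzkin \<alpha> \<beta> k h)"
    by (simp add: sum_distrib_left sum.distrib algebra_simps)
  also have "\<dots> = (\<Sum>k\<le>Suc n. real (Suc n choose k) * a ^ (Suc n - k) * motzkin \<alpha> \<beta> k h)"
    by (simp only: sum_binomial_Suc motzkin.simps(2))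
  finally show ?case .
qed

lemma motzkin_unshift:
  "(\<Sum>k\<le>n. (-1) ^ (n - k) * real (n choose k) * a ^ (n - k) * motzkin (\<lambda>h. \<alpha> h + a) \<beta> k h)
   = motzkin \<alpha> \<beta> n h"
proof -
  have "motzkin \<alpha> \<beta> n h = motzkin (\<lambda>h. (\<alpha> h + a) + - a) \<beta> n h"
    by simp
  also have "\<dots> = (\<Sum>k\<le>n. real (n choose k) * (- a) ^ (n - k) * motzkin (\<lambda>h. \<alpha> h + a) \<beta> k h)"
    by (rule motzkin_shift)
  finally show ?thesis
    by (simp only: power_minus[of a] mult.assoc mult.left_commute[of "(-1) ^ _"])
qed

section \<open>Dyck paths and ballot numbers\<close>

definition ballot :: "nat \<Rightarrow> nat \<Rightarrow> real" where
  "ballot k r = real (k choose r) - (if r = 0 then 0 else real (k choose (r - 1)))"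

lemma ballot_0 [simp]: "ballot k 0 = 1"
  by (simp add: ballot_def)

lemma ballot_Suc_Suc: "ballot (Suc k) (Suc r) = ballot k (Suc r) + ballot k r"
  by (cases r) (simp_all add: ballot_def)

lemma ballot_odd_middle: "ballot (Suc (2 * r)) (Suc r) = 0"
proof -
  have "Suc (2 * r) choose Suc r = Suc (2 * r) choose r"
    using binomial_symmetric[of "Suc r" "Suc (2 * r)"] by simp
  then show ?thesis by (simp add: ballot_def)
qed

lemma ballot_even_middle: "ballot (2 * m) m = catalan m"
proof (cases m)
  case (Suc m')
  have "m * ((2 * m) choose m) = (2 * m) * ((2 * m - 1) choose (m - 1))"
    using times_binomial_minus1_eq[of m "2 * m"] Suc by simp
  also have "\<dots> = (m + 1) * ((2 * m) choose (m - 1))"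
    using binomial_absorb_comp[of "2 * m" "m - 1"] Suc by simp
  finally have "real m * real ((2 * m) choose m) = (real m + 1) * real ((2 * m) choose (m - 1))"
    by (metis of_nat_1 of_nat_add of_nat_mult)
  then have "real ((2 * m) choose (m - 1)) = real m * real ((2 * m) choose m) / (real m + 1)"
    by (simp add: field_simps)
  then show ?thesis
    using Suc by (simp add: ballot_def catalan_def field_simps)
qed (simp add: catalan_def)

lemma motzkin_dyck:
  "motzkin (\<lambda>_. 0) (\<lambda>_. x) k h
   = (if h \<le> k \<and> even (k + h) then x ^ ((k - h) div 2) * ballot k ((k - h) div 2) else 0)"
proof (induction k arbitrary: h)
  case 0
  then show ?case by simp
next
  case (Suc k)
  have step: "motzkin (\<lambda>_. 0) (\<lambda>_. x) (Suc k) h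
      = (if h = 0 then 0 else motzkin (\<lambda>_. 0) (\<lambda>_. x) k (h - 1)) + x * motzkin (\<lambda>_. 0) (\<lambda>_. x) k (Suc h)"
    by simp
  show ?case
  proof (cases "h \<le> Suc k \<and> even (Suc k + h)")
    case False
    then show ?thesis
      unfolding step Suc.IH by auto
  next
    case True
    then obtain r where r: "Suc k = h + 2 * r"
      by (metis add_diff_inverse_nat evenE not_le odd_add)
    consider (top) "r = 0" | (bottom) r' where "h = 0" "r = Suc r'" | (middle) r' where "h > 0" "r = Suc r'"
      by (cases r) auto
    then show ?thesis
    proof cases
      case top
      then show ?thesis
        unfolding step Suc.IH using r by auto
    next
      case bottom
      then have k: "k = Suc (2 * r')"
        using r by simp
      have "ballot (Suc k) (Suc r') = ballot k r'"
        using ballot_Suc_Suc[of k r'] ballot_odd_middle[of r'] k by simp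
      then show ?thesis
        unfolding step Suc.IH using bottom k by simp
    next
      case middle
      then have k: "k = h + Suc (2 * r')"
        using r by simp
      have "(k - (h - 1)) div 2 = Suc r'" "(k - Suc h) div 2 = r'" "(Suc k - h) div 2 = Suc r'" "h - 1 \<le> k"
        using k middle(1) by presburger+
      then show ?thesis
        unfolding step Suc.IH using middle k
        by (simp add: ballot_Suc_Suc algebra_simps)
    qed
  qed
qed

lemma motzkin_dyck_0:
  "motzkin (\<lambda>_. 0) (\<lambda>_. x) n 0 = (if even n then x ^ (n div 2) * catalan (n div 2) else 0)"
proof (cases "even n")
  case True
  then obtain m where "n = 2 * m" ..
  then show ?thesis
    by (simp add: motzkin_dyck ballot_even_middle)
qed (simp add: motzkin_dyck)

section \<open>Adding an element to a partition\<close>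

definition join_block :: "'a \<Rightarrow> 'a set set \<Rightarrow> 'a set \<Rightarrow> 'a set set" where
  "join_block m P B = insert (insert m B) (P - {B})"

lemma partition_on_remove_block:
  assumes "partition_on A P" "B \<in> P"
  shows "partition_on (A - B) (P - {B})" "disjnt B (\<Union>(P - {B}))"
proof -
  have "disjoint P"
    using assms(1) by (rule partition_onD2)
  then show disj: "disjnt B (\<Union>(P - {B}))"
    using assms(2) by (auto simp: disjnt_def pairwise_def)
  have "partition_on A (insert B (P - {B}))"
    using assms by (simp add: insert_absorb)
  then show "partition_on (A - B) (P - {B})"
    using partition_on_insert[OF disj] by blast
qed

lemma partition_on_insert_singleton:
  assumes "partition_on A P" "m \<notin> A"
  shows "partition_on (insert m A) (insert {m} P)"
proof -
  have "disjnt {m} (\<Union>P)"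
    using assms partition_onD1[OF assms(1)] by auto
  then show ?thesis
    using assms by (simp add: partition_on_insert)
qed

lemma partition_on_join_block:
  assumes "partition_on A P" "B \<in> P" "m \<notin> A"
  shows "partition_on (insert m A) (join_block m P B)"
proof -
  note rest = partition_on_remove_block[OF assms(1,2)]
  have "disjnt (insert m B) (\<Union>(P - {B}))"
    using rest partition_onD1[OF rest(1)] assms(3) by (auto simp: disjnt_def)
  moreover have "insert m A - insert m B = A - B" "B \<subseteq> A"
    using assms partition_onD1[OF assms(1)] by auto
  ultimately show ?thesis
    unfolding join_block_def using rest(1) by (auto simp: partition_on_insert)
qed

lemma restrict_insert_singleton:
  assumes "partition_on A P" "m \<notin> A"
  shows "(\<inter>) A ` insert {m} P - {{}} = P"
proof -
  have "(\<inter>) A ` P = id ` P"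
    using partition_onD1[OF assms(1)] by (intro image_cong) auto
  then show ?thesis
    using assms partition_onD3[OF assms(1)] by auto
qed

lemma restrict_join_block:
  assumes "partition_on A P" "B \<in> P" "m \<notin> A"
  shows "(\<inter>) A ` join_block m P B - {{}} = P"
proof -
  have "(\<inter>) A ` (P - {B}) = id ` (P - {B})"
    using partition_onD1[OF assms(1)] by (intro image_cong) auto
  moreover have "A \<inter> insert m B = B"
    using assms partition_onD1[OF assms(1)] by auto
  ultimately show ?thesis
    using assms partition_onD3[OF assms(1)] by (auto simp: join_block_def)
qed

lemma restrict_partition_on_insert:
  assumes Q: "partition_on (insert m A) Q" and m: "m \<notin> A" and C: "C \<in> Q" "m \<in> C"
  shows "(\<inter>) A ` Q - {{}} = insert (C - {m}) (Q - {C}) - {{}}"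
proof -
  have "A \<inter> D = D" if D: "D \<in> Q - {C}" for D
  proof -
    have "m \<notin> D"
      using D C partition_on_remove_block(2)[OF Q C(1)] by (auto simp: disjnt_def)
    then show ?thesis
      using D partition_onD1[OF Q] by auto
  qed
  then have "(\<inter>) A ` (Q - {C}) = id ` (Q - {C})"
    by (intro image_cong) auto
  moreover have "A \<inter> C = C - {m}"
    using C m partition_onD1[OF Q] by auto
  ultimately have "(\<inter>) A ` Q = insert (C - {m}) (Q - {C})"
    using insert_Diff[OF C(1)] by (metis id_apply image_id image_insert)
  then show ?thesis
    by simp
qed

lemma partition_on_insert_cases:
  assumes Q: "partition_on (insert m A) Q" and m: "m \<notin> A"
  defines "P \<equiv> (\<inter>) A ` Q - {{}}"
  obtains "Q = insert {m} P" | B where "B \<in> P" "Q = join_block m P B"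
proof -
  obtain C where C: "C \<in> Q" "m \<in> C"
    using partition_onD1[OF Q] by blast
  have P_eq: "P = insert (C - {m}) (Q - {C}) - {{}}"
    unfolding P_def by (rule restrict_partition_on_insert[OF Q m C])
  have "{} \<notin> Q"
    by (rule partition_onD3[OF Q])
  show thesis
  proof (cases "C = {m}")
    case True
    then have "Q = insert {m} P"
      unfolding P_eq using C(1) \<open>{} \<notin> Q\<close> by auto
    then show thesis
      by (rule that(1))
  next
    case False
    define B where "B = C - {m}"
    have "B \<noteq> {}"
      unfolding B_def using False C(2) by blast
    then have P_B: "P = insert B (Q - {C})"
      unfolding P_eq B_def using \<open>{} \<notin> Q\<close> by auto
    have "B \<notin> Q - {C}"
      using \<open>B \<noteq> {}\<close> partition_on_remove_block(2)[OF Q C(1)] unfolding B_def by (auto simp: disjnt_def)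
    then have "join_block m P B = insert C (Q - {C})"
      unfolding join_block_def P_B B_def using C(2) by (simp add: insert_absorb)
    then have "Q = join_block m P B"
      using C(1) by (simp add: insert_absorb)
    then show thesis
      using that(2) P_B by blast
  qed
qed

lemma join_block_inj:
  assumes "partition_on A P" "m \<notin> A"
  shows "inj_on (join_block m P) P"
proof (rule inj_onI)
  fix B B' assume B: "B \<in> P" "B' \<in> P" and eq: "join_block m P B = join_block m P B'"
  have m_out: "m \<notin> D" if "D \<in> P" for D
    using that assms partition_onD1[OF assms(1)] by auto
  have "insert m B \<in> join_block m P B"
    by (simp add: join_block_def)
  then have "insert m B \<in> join_block m P B'"
    by (simp only: eq)
  then have "insert m B = insert m B'"
    using m_out[of "insert m B"] unfolding join_block_def by blast
  then show "B = B'"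
    using m_out B by (metis insert_ident)
qed

lemma insert_singleton_notin_join_block:
  assumes "partition_on A P" "m \<notin> A"
  shows "insert {m} P \<notin> join_block m P ` P"
proof
  assume "insert {m} P \<in> join_block m P ` P"
  then obtain B where B: "B \<in> P" "{m} \<in> join_block m P B"
    by auto
  have "m \<notin> D" "D \<noteq> {}" if "D \<in> P" for D
    using that assms partition_onD1[OF assms(1)] partition_onD3[OF assms(1)] by auto
  then show False
    using B unfolding join_block_def by auto
qed

lemma card_join_block:
  assumes "finite P" "B \<in> P" "insert m B \<notin> P"
  shows "card (join_block m P B) = card P"
proof -
  have "card P > 0"
    using assms(1,2) card_gt_0_iff by blast
  then show ?thesis
    using assms by (simp add: join_block_def card_Diff_singleton)
qed

lemma partition_on_insert_fibre:
  assumes P: "partition_on A P" and m: "m \<notin> A"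
  shows "{Q. partition_on (insert m A) Q \<and> (\<inter>) A ` Q - {{}} = P} = insert (insert {m} P) (join_block m P ` P)"
proof (intro equalityI subsetI)
  fix Q assume "Q \<in> {Q. partition_on (insert m A) Q \<and> (\<inter>) A ` Q - {{}} = P}"
  then have Q: "partition_on (insert m A) Q" "(\<inter>) A ` Q - {{}} = P"
    by auto
  show "Q \<in> insert (insert {m} P) (join_block m P ` P)"
    by (rule partition_on_insert_cases[OF Q(1) m]) (use Q(2) in auto)
next
  fix Q assume "Q \<in> insert (insert {m} P) (join_block m P ` P)"
  then consider "Q = insert {m} P" | B where "B \<in> P" "Q = join_block m P B"
    by blast
  then show "Q \<in> {Q. partition_on (insert m A) Q \<and> (\<inter>) A ` Q - {{}} = P}"
  proof cases
    case 1
    then show ?thesis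
      using partition_on_insert_singleton[OF P m] restrict_insert_singleton[OF P m] by simp
  next
    case 2
    then show ?thesis
      using partition_on_join_block[OF P _ m] restrict_join_block[OF P _ m] by simp
  qed
qed

lemma sum_partition_on_insert:
  assumes A: "finite A" and m: "m \<notin> A"
  shows "(\<Sum>Q | partition_on (insert m A) Q. f Q)
       = (\<Sum>P | partition_on A P. f (insert {m} P) + (\<Sum>B\<in>P. f (join_block m P B)))"
proof -
  let ?restrict = "\<lambda>Q. (\<inter>) A ` Q - {{}}"
  have fin: "finite {Q. partition_on (insert m A) Q}" "finite {P. partition_on A P}"
    using A by (simp_all add: finitely_many_partition_on)
  have "?restrict ` {Q. partition_on (insert m A) Q} \<subseteq> {P. partition_on A P}"
    using partition_on_restrict[of "insert m A" _ A] Int_absorb2[OF subset_insertI, of A m] by auto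
  then have "(\<Sum>Q | partition_on (insert m A) Q. f Q)
      = (\<Sum>P | partition_on A P. \<Sum>Q | partition_on (insert m A) Q \<and> ?restrict Q = P. f Q)"
    using sum.group[OF fin, of ?restrict f] by simp
  also have "\<dots> = (\<Sum>P | partition_on A P. f (insert {m} P) + (\<Sum>B\<in>P. f (join_block m P B)))"
  proof (rule sum.cong[OF refl])
    fix P assume "P \<in> {P. partition_on A P}"
    then have P: "partition_on A P" "finite P"
      using finite_elements[OF A] by auto
    show "(\<Sum>Q | partition_on (insert m A) Q \<and> ?restrict Q = P. f Q)
        = f (insert {m} P) + (\<Sum>B\<in>P. f (join_block m P B))"
      unfolding partition_on_insert_fibre[OF P(1) m]
      using P insert_singleton_notin_join_block[OF P(1) m] join_block_inj[OF P(1) m]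
      by (simp add: sum.reindex)
  qed
  finally show ?thesis .
qed

definition block_arcs :: "nat set \<Rightarrow> (nat \<times> nat) set" where
  "block_arcs B = {(i, j). i \<in> B \<and> j \<in> B \<and> i < j \<and> (\<forall>k\<in>B. i < k \<longrightarrow> j \<le> k)}"

lemma arcs_eq_Union_block_arcs: "arcs P = (\<Union>B\<in>P. block_arcs B)"
  by (auto simp: arcs_def block_arcs_def)

lemma arcs_insert: "arcs (insert B P) = block_arcs B \<union> arcs P"
  by (simp add: arcs_eq_Union_block_arcs)

lemma arcs_empty [simp]: "arcs {} = {}"
  by (simp add: arcs_def)

lemma arcs_insert_singleton [simp]: "arcs (insert {m} P) = arcs P"
  by (auto simp: arcs_insert block_arcs_def)

lemma block_arcs_insert_Max:
  assumes "finite B" "B \<noteq> {}" "\<forall>b\<in>B. b < m"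
  shows "block_arcs (insert m B) = insert (Max B, m) (block_arcs B)"
proof -
  have Max: "Max B \<in> B" "\<forall>b\<in>B. b \<le> Max B"
    using assms by auto
  have "(i, m) \<in> block_arcs (insert m B) \<longleftrightarrow> i = Max B" for i
  proof
    assume i: "(i, m) \<in> block_arcs (insert m B)"
    then have "i \<in> B" "\<forall>k\<in>B. i < k \<longrightarrow> m \<le> k"
      using assms by (auto simp: block_arcs_def)
    then show "i = Max B"
      using Max assms(3) by (metis antisym_conv1 leD)
  qed (use Max assms in \<open>auto simp: block_arcs_def\<close>)
  moreover have "(i, j) \<in> block_arcs (insert m B) \<longleftrightarrow> (i, j) \<in> block_arcs B" if "j \<noteq> m" for i j
    using that assms by (auto simp: block_arcs_def)
  moreover have "(i, m) \<notin> block_arcs B" for i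
    using assms(3) by (auto simp: block_arcs_def)
  ultimately show ?thesis
    by (intro set_eqI) (metis insert_iff prod.collapse)
qed

lemma arcs_join_block:
  assumes "B \<in> P" "finite B" "B \<noteq> {}" "\<forall>b\<in>B. b < m"
  shows "arcs (join_block m P B) = insert (Max B, m) (arcs P)"
proof -
  have "arcs P = block_arcs B \<union> arcs (P - {B})"
    using assms(1) by (metis arcs_insert insert_Diff)
  then show ?thesis
    unfolding join_block_def arcs_insert block_arcs_insert_Max[OF assms(2-4)] by auto
qed

lemma arcs_subset: "arcs P \<subseteq> \<Union>P \<times> \<Union>P"
  by (auto simp: arcs_def)

definition arcs_weight :: "real \<Rightarrow> real \<Rightarrow> (nat \<times> nat) set \<Rightarrow> real" where
  "arcs_weight x y S = x ^ card {(i, j) \<in> S. j \<noteq> Suc i} * y ^ card {(i, j) \<in> S. j = Suc i}"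

lemma arcs_weight_insert:
  assumes "finite S" "(i, j) \<notin> S"
  shows "arcs_weight x y (insert (i, j) S) = (if j = Suc i then y else x) * arcs_weight x y S"
proof -
  let ?short = "{(a, b) \<in> S. b = Suc a}" and ?long = "{(a, b) \<in> S. b \<noteq> Suc a}"
  have fin: "finite ?short" "finite ?long"
    using assms(1) by (auto intro: rev_finite_subset)
  show ?thesis
  proof (cases "j = Suc i")
    case True
    then have "{(a, b) \<in> insert (i, j) S. b = Suc a} = insert (i, j) ?short"
      "{(a, b) \<in> insert (i, j) S. b \<noteq> Suc a} = ?long"
      by auto
    then show ?thesis
      using True fin assms(2) by (simp add: arcs_weight_def)
  next
    case False
    then have "{(a, b) \<in> insert (i, j) S. b = Suc a} = ?short"
      "{(a, b) \<in> insert (i, j) S. b \<noteq> Suc a} = insert (i, j) ?long"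
      by auto
    then show ?thesis
      using False fin assms(2) by (simp add: arcs_weight_def)
  qed
qed

lemma arcs_weight_arcs: "arcs_weight x y (arcs P) = x ^ card (arcs P - cov P) * y ^ card (cov P)"
proof -
  have "arcs P - cov P = {(i, j) \<in> arcs P. j \<noteq> Suc i}" "cov P = {(i, j) \<in> arcs P. j = Suc i}"
    by (auto simp: cov_def)
  then show ?thesis
    by (simp add: arcs_weight_def)
qed

lemma finite_set_partitions: "finite (set_partitions n)"
  unfolding set_partitions_def by (rule finitely_many_partition_on) simp

lemma set_partitions_0: "set_partitions 0 = {{}}"
  by (simp add: set_partitions_def partition_on_empty)

lemma set_partitionsD:
  assumes "P \<in> set_partitions n"
  shows "finite P" "\<Union>P = {1..n}" "disjoint P" "{} \<notin> P"
proof -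
  have P: "partition_on {1..n} P"
    using assms by (simp add: set_partitions_def)
  show "finite P"
    using finite_elements[OF _ P] by simp
  show "\<Union>P = {1..n}" "disjoint P" "{} \<notin> P"
    using partition_onD1[OF P] partition_onD2[OF P] partition_onD3[OF P] by simp_all
qed

lemma set_partitions_block:
  assumes "P \<in> set_partitions n" "B \<in> P"
  shows "finite B" "B \<noteq> {}" "B \<subseteq> {1..n}" "Max B \<in> B" "Max B \<le> n"
proof -
  show "B \<subseteq> {1..n}" "B \<noteq> {}"
    using assms set_partitionsD[OF assms(1)] by auto
  then show "finite B" "Max B \<in> B" "Max B \<le> n"
    using finite_subset[of B "{1..n}"] by auto
qed

lemma set_partition_block_eqI:
  assumes "P \<in> set_partitions n" "B \<in> P" "C \<in> P" "a \<in> B" "a \<in> C"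
  shows "B = C"
  using disjointD[OF set_partitionsD(3)[OF assms(1)] assms(2,3)] assms(4,5) by blast

lemma Suc_notin_set_partition_block: "P \<in> set_partitions n \<Longrightarrow> B \<in> P \<Longrightarrow> Suc n \<notin> B"
  using set_partitions_block(3) by fastforce

lemma finite_arcs_set_partition: "P \<in> set_partitions n \<Longrightarrow> finite (arcs P)"
  using arcs_subset[of P] set_partitionsD(2)[of P n] by (metis finite_SigmaI finite_atLeastAtMost finite_subset)

lemma arcs_set_partition_le: "P \<in> set_partitions n \<Longrightarrow> (i, j) \<in> arcs P \<Longrightarrow> i < j \<and> j \<le> n"
  using arcs_subset[of P] set_partitionsD(2)[of P n] by (auto simp: arcs_def)

lemma sum_set_partitions_Suc:
  "(\<Sum>Q\<in>set_partitions (Suc n). f Q)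
   = (\<Sum>P\<in>set_partitions n. f (insert {Suc n} P) + (\<Sum>B\<in>P. f (join_block (Suc n) P B)))"
proof -
  have "{1..Suc n} = insert (Suc n) {1..n}"
    by auto
  then show ?thesis
    unfolding set_partitions_def using sum_partition_on_insert[of "{1..n}" "Suc n" f] by simp
qed

lemma sum_set_partitions_1: "(\<Sum>P\<in>set_partitions 1. f P) = f {{1}}"
  using sum_set_partitions_Suc[of f 0] by (simp add: set_partitions_0)

lemma arcs_join_block_set_partition:
  assumes "P \<in> set_partitions n" "B \<in> P"
  shows "arcs (join_block (Suc n) P B) = insert (Max B, Suc n) (arcs P)" "(Max B, Suc n) \<notin> arcs P"
proof -
  show "arcs (join_block (Suc n) P B) = insert (Max B, Suc n) (arcs P)"
    using set_partitions_block[OF assms] by (intro arcs_join_block[OF assms(2)]) auto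
  show "(Max B, Suc n) \<notin> arcs P"
    using arcs_set_partition_le[OF assms(1)] by fastforce
qed

lemma sum_set_partitions_eq_motzkin:
  fixes g :: "nat \<Rightarrow> nat set set \<Rightarrow> real"
  assumes base: "\<And>h. (\<Sum>P\<in>set_partitions n\<^sub>0. g h P) = (if h = 0 then 1 else 0)"
    and step: "\<And>n P h. n\<^sub>0 \<le> n \<Longrightarrow> P \<in> set_partitions n \<Longrightarrow>
      g h (insert {Suc n} P) + (\<Sum>B\<in>P. g h (join_block (Suc n) P B))
      = (if h = 0 then 0 else g (h - 1) P) + \<alpha> h * g h P + \<beta> h * g (Suc h) P"
  shows "(\<Sum>P\<in>set_partitions (n\<^sub>0 + n). g h P) = motzkin \<alpha> \<beta> n h"
proof (induction n arbitrary: h)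
  case 0
  then show ?case using base by simp
next
  case (Suc n)
  let ?S = "\<lambda>h. \<Sum>P\<in>set_partitions (n\<^sub>0 + n). g h P"
  have "(\<Sum>P\<in>set_partitions (n\<^sub>0 + Suc n). g h P)
      = (\<Sum>P\<in>set_partitions (n\<^sub>0 + n).
           (if h = 0 then 0 else g (h - 1) P) + \<alpha> h * g h P + \<beta> h * g (Suc h) P)"
    unfolding add_Suc_right sum_set_partitions_Suc using step by (intro sum.cong) auto
  also have "\<dots> = (if h = 0 then 0 else ?S (h - 1)) + \<alpha> h * ?S h + \<beta> h * ?S (Suc h)"
    by (simp add: sum.distrib sum_distrib_left)
  finally show ?case
    by (simp add: Suc.IH)
qed

section \<open>Arc-weighted partitions\<close>

lemma binomial_Suc_if: "Suc d choose h = (d choose h) + (if h = 0 then 0 else d choose (h - 1))"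
  by (cases h) simp_all

lemma times_binomial_eq: "real d * real (d choose h) = real h * real (d choose h) + real (Suc h) * real (d choose Suc h)"
proof -
  have "Suc h * (d choose Suc h) = (d - h) * (d choose h)"
    by (simp only: binomial_absorption binomial_absorb_comp)
  moreover have "d * (d choose h) = h * (d choose h) + (d - h) * (d choose h)" if "h \<le> d"
    using that by (metis add_mult_distrib le_add_diff_inverse)
  ultimately have "d * (d choose h) = h * (d choose h) + Suc h * (d choose Suc h)"
    by (cases "h \<le> d") (simp_all add: binomial_eq_0)
  then show ?thesis
    by (metis of_nat_add of_nat_mult)
qed

lemma sum_blocks_Max_eq_top:
  assumes P: "P \<in> set_partitions (Suc n)"
  shows "(\<Sum>B\<in>P. if Max B = Suc n then y else x) = y + real (card P - 1) * x"
proof -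
  have "Suc n \<in> \<Union>P"
    using set_partitionsD(2)[OF P] by simp
  then obtain C where C: "C \<in> P" "Suc n \<in> C"
    by blast
  have "Max B = Suc n \<longleftrightarrow> B = C" if "B \<in> P" for B
    using set_partitions_block[OF P that] set_partitions_block[OF P C(1)] C
      set_partition_block_eqI[OF P that C(1)] by (metis Max_ge antisym)
  then have "(\<Sum>B\<in>P. if Max B = Suc n then y else x) = (\<Sum>B\<in>P. if B = C then y else x)"
    by (intro sum.cong) auto
  also have "\<dots> = y + real (card P - 1) * x"
    using C(1) set_partitionsD(1)[OF P] by (simp add: sum.remove)
  finally show ?thesis .
qed

text \<open>Level h chooses h of the blocks other than the one containing the largest element.\<close>
definition block_weight :: "real \<Rightarrow> real \<Rightarrow> nat \<Rightarrow> nat set set \<Rightarrow> real" where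
  "block_weight x y h P = real (card P - 1 choose h) * arcs_weight x y (arcs P)"

lemma block_weight_step:
  assumes P: "P \<in> set_partitions (Suc n)"
  shows "block_weight x y h (insert {Suc (Suc n)} P) + (\<Sum>B\<in>P. block_weight x y h (join_block (Suc (Suc n)) P B))
       = (if h = 0 then 0 else block_weight x y (h - 1) P) + (x * real h + (y + 1)) * block_weight x y h P
         + x * real (Suc h) * block_weight x y (Suc h) P"
proof -
  obtain d where d: "card P = Suc d"
    using set_partitionsD(1,2)[OF P] by (cases "card P") auto
  let ?w = "arcs_weight x y (arcs P)"
  have "{Suc (Suc n)} \<notin> P"
    using Suc_notin_set_partition_block[OF P] by blast
  then have new: "block_weight x y h (insert {Suc (Suc n)} P) = real (Suc d choose h) * ?w"
    using d set_partitionsD(1)[OF P] by (simp add: block_weight_def)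
  have "block_weight x y h (join_block (Suc (Suc n)) P B) = real (d choose h) * ?w * (if Max B = Suc n then y else x)"
    if B: "B \<in> P" for B
  proof -
    have "insert (Suc (Suc n)) B \<notin> P"
      using Suc_notin_set_partition_block[OF P] by blast
    then have "card (join_block (Suc (Suc n)) P B) = Suc d"
      using card_join_block[OF set_partitionsD(1)[OF P] B] d by simp
    then show ?thesis
      using arcs_join_block_set_partition[OF P B] arcs_weight_insert[OF finite_arcs_set_partition[OF P]]
      by (simp add: block_weight_def)
  qed
  then have joined: "(\<Sum>B\<in>P. block_weight x y h (join_block (Suc (Suc n)) P B))
      = real (d choose h) * ?w * (y + real d * x)"
    using sum_blocks_Max_eq_top[OF P, of y x] d by (simp add: sum_distrib_left[symmetric])
  have "real (Suc d choose h) * ?w + real (d choose h) * ?w * (y + real d * x)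
      = (real (Suc d choose h) + real (d choose h) * y + x * (real d * real (d choose h))) * ?w"
    by (simp add: algebra_simps)
  also have "\<dots> = ((if h = 0 then 0 else real (d choose (h - 1))) + (x * real h + (y + 1)) * real (d choose h)
      + x * real (Suc h) * real (d choose Suc h)) * ?w"
    unfolding times_binomial_eq binomial_Suc_if[of d h] by (simp add: algebra_simps)
  finally show ?thesis
    unfolding new joined by (simp add: block_weight_def d algebra_simps)
qed

lemma Bpoly_eq_motzkin:
  "Bpoly (Suc n) x y = motzkin (\<lambda>h. x * real h + (y + 1)) (\<lambda>h. x * real (Suc h)) n 0"
proof -
  have "(\<Sum>P\<in>set_partitions (1 + n). block_weight x y h P)
      = motzkin (\<lambda>h. x * real h + (y + 1)) (\<lambda>h. x * real (Suc h)) n h" for h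
  proof (rule sum_set_partitions_eq_motzkin)
    show "(\<Sum>P\<in>set_partitions 1. block_weight x y h P) = (if h = 0 then 1 else 0)" for h
      unfolding sum_set_partitions_1 by (simp add: block_weight_def arcs_weight_def)
  next
    fix m P h assume "1 \<le> m" and "P \<in> set_partitions m"
    then show "block_weight x y h (insert {Suc m} P) + (\<Sum>B\<in>P. block_weight x y h (join_block (Suc m) P B))
        = (if h = 0 then 0 else block_weight x y (h - 1) P) + (x * real h + (y + 1)) * block_weight x y h P
          + x * real (Suc h) * block_weight x y (Suc h) P"
      using block_weight_step[of P "m - 1" x y h] by simp
  qed
  from this[of 0] show ?thesis
    by (simp add: Bpoly_def block_weight_def arcs_weight_arcs)
qed

section \<open>Feasible partitions\<close>

definition singleton_blocks :: "'a set set \<Rightarrow> 'a set set" where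
  "singleton_blocks P = {B \<in> P. card B = 1}"

lemma singleton_blocks_insert_singleton: "singleton_blocks (insert {m} P) = insert {m} (singleton_blocks P)"
  by (auto simp: singleton_blocks_def)

lemma singleton_blocks_join_block:
  assumes "finite B" "B \<noteq> {}" "m \<notin> B"
  shows "singleton_blocks (join_block m P B) = singleton_blocks P - {B}"
proof -
  have "card (insert m B) \<noteq> 1"
    using assms by (simp add: card_gt_0_iff)
  then show ?thesis
    by (auto simp: singleton_blocks_def join_block_def)
qed

text \<open>The number of h-subsets of a c-set that contain a given s-subset.\<close>
definition supersets_choose :: "nat \<Rightarrow> nat \<Rightarrow> nat \<Rightarrow> real" where
  "supersets_choose h s c = (if s \<le> h then real ((c - s) choose (h - s)) else 0)"

lemma supersets_choose_Suc_Suc: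
  "supersets_choose h (Suc s) (Suc c) = (if h = 0 then 0 else supersets_choose (h - 1) s c)"
  by (cases h) (auto simp: supersets_choose_def Suc_diff_le)

lemma supersets_choose_step:
  assumes "s \<le> c"
  shows "real s * supersets_choose h (s - 1) c + real (c - s) * supersets_choose h s c
       = real h * supersets_choose h s c + real (Suc h) * supersets_choose (Suc h) s c"
proof (cases "s \<le> h")
  case True
  define b t where "b = h - s" and "t = c - s"
  have "supersets_choose h (s - 1) c = real (t choose b) + real (t choose Suc b)" if "s > 0"
  proof -
    have "c - (s - 1) = Suc t" "h - (s - 1) = Suc b" "s - 1 \<le> h"
      using that True assms by (simp_all add: b_def t_def)
    then show ?thesis
      using True by (simp add: supersets_choose_def)
  qed
  moreover have "supersets_choose h s c = real (t choose b)" "supersets_choose (Suc h) s c = real (t choose Suc b)"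
    using True by (simp_all add: supersets_choose_def b_def t_def Suc_diff_le)
  moreover note times_binomial_eq[of t b]
  moreover have "h = b + s" "c - s = t"
    using True by (simp_all add: b_def t_def)
  ultimately show ?thesis
    by (cases "s = 0") (simp_all add: algebra_simps)
next
  case False
  then consider "s = Suc h" | "h < s - 1"
    by linarith
  then show ?thesis
    by cases (simp_all add: supersets_choose_def)
qed

text \<open>At level h a partition is counted once for each set of h of its blocks that contains all its
  singleton blocks; at level 0 only the feasible partitions remain.\<close>
definition feasible_weight :: "real \<Rightarrow> nat \<Rightarrow> nat set set \<Rightarrow> real" where
  "feasible_weight x h P = x ^ card (arcs P) * supersets_choose h (card (singleton_blocks P)) (card P)"

lemma feasible_weight_step:
  assumes P: "P \<in> set_partitions n"
  shows "feasible_weight x h (insert {Suc n} P) + (\<Sum>B\<in>P. feasible_weight x h (join_block (Suc n) P B))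
       = (if h = 0 then 0 else feasible_weight x (h - 1) P) + x * real h * feasible_weight x h P
         + x * real (Suc h) * feasible_weight x (Suc h) P"
proof -
  let ?w = "x ^ card (arcs P)" and ?s = "card (singleton_blocks P)" and ?c = "card P"
  have fin: "finite P" "finite (singleton_blocks P)" "singleton_blocks P \<subseteq> P"
    using set_partitionsD(1)[OF P] by (auto simp: singleton_blocks_def)
  have "{Suc n} \<notin> P"
    using Suc_notin_set_partition_block[OF P] by blast
  moreover have "{Suc n} \<notin> singleton_blocks P"
    using calculation fin(3) by blast
  ultimately have new: "feasible_weight x h (insert {Suc n} P) = ?w * (if h = 0 then 0 else supersets_choose (h - 1) ?s ?c)"
    using fin by (simp add: feasible_weight_def singleton_blocks_insert_singleton supersets_choose_Suc_Suc)
  have "feasible_weight x h (join_block (Suc n) P B)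
      = x * ?w * (if B \<in> singleton_blocks P then supersets_choose h (?s - 1) ?c else supersets_choose h ?s ?c)"
    if B: "B \<in> P" for B
  proof -
    have "insert (Suc n) B \<notin> P"
      using Suc_notin_set_partition_block[OF P] by blast
    then have "card (join_block (Suc n) P B) = ?c"
      using card_join_block[OF fin(1) B] by simp
    moreover have "card (singleton_blocks (join_block (Suc n) P B)) = (if B \<in> singleton_blocks P then ?s - 1 else ?s)"
      using singleton_blocks_join_block[OF set_partitions_block(1,2)[OF P B] Suc_notin_set_partition_block[OF P B]]
        fin(2) by (simp add: card_Diff_singleton_if)
    moreover have "card (arcs (join_block (Suc n) P B)) = Suc (card (arcs P))"
      using arcs_join_block_set_partition[OF P B] finite_arcs_set_partition[OF P] by simp
    ultimately show ?thesis
      by (simp add: feasible_weight_def)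
  qed
  then have "(\<Sum>B\<in>P. feasible_weight x h (join_block (Suc n) P B))
      = x * ?w * (\<Sum>B\<in>P. if B \<in> singleton_blocks P then supersets_choose h (?s - 1) ?c else supersets_choose h ?s ?c)"
    by (simp add: sum_distrib_left)
  also have "(\<Sum>B\<in>P. if B \<in> singleton_blocks P then supersets_choose h (?s - 1) ?c else supersets_choose h ?s ?c)
      = real ?s * supersets_choose h (?s - 1) ?c + real (?c - ?s) * supersets_choose h ?s ?c"
    using fin by (simp add: sum.If_cases Int_absorb1 Diff_eq[symmetric] card_Diff_subset)
  also have "\<dots> = real h * supersets_choose h ?s ?c + real (Suc h) * supersets_choose (Suc h) ?s ?c"
    by (simp only: supersets_choose_step[OF card_mono[OF fin(1,3)]])
  finally show ?thesis
    unfolding new by (simp add: feasible_weight_def algebra_simps)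
qed

lemma Fe_eq_sum_feasible_weight: "Fe n x = (\<Sum>P\<in>set_partitions n. feasible_weight x 0 P)"
  unfolding Fe_def sum.inter_filter[OF finite_set_partitions]
proof (rule sum.cong[OF refl])
  fix P assume P: "P \<in> set_partitions n"
  have "card B \<noteq> 0" if "B \<in> P" for B
    using set_partitions_block(1,2)[OF P that] by simp
  then have "feasible P \<longleftrightarrow> singleton_blocks P = {}"
    by (force simp: feasible_def singleton_blocks_def)
  moreover have "finite (singleton_blocks P)"
    using set_partitionsD(1)[OF P] by (simp add: singleton_blocks_def)
  ultimately show "(if feasible P then x ^ card (arcs P) else 0) = feasible_weight x 0 P"
    by (simp add: feasible_weight_def supersets_choose_def)
qed

lemma Fe_eq_motzkin: "Fe n x = motzkin (\<lambda>h. x * real h) (\<lambda>h. x * real (Suc h)) n 0"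
proof -
  have "(\<Sum>P\<in>set_partitions (0 + n). feasible_weight x h P) = motzkin (\<lambda>h. x * real h) (\<lambda>h. x * real (Suc h)) n h"
    for h
  proof (rule sum_set_partitions_eq_motzkin)
    show "(\<Sum>P\<in>set_partitions 0. feasible_weight x h P) = (if h = 0 then 1 else 0)" for h
      by (simp add: set_partitions_0 feasible_weight_def singleton_blocks_def supersets_choose_def)
  qed (rule feasible_weight_step)
  then show ?thesis
    by (simp add: Fe_eq_sum_feasible_weight)
qed

section \<open>Noncrossing partitions\<close>

text \<open>No arc passes over v, so an arc from v to a new largest element creates no crossing.\<close>
definition visible :: "nat set set \<Rightarrow> nat \<Rightarrow> bool" where
  "visible P v \<longleftrightarrow> \<not> (\<exists>i k. (i, k) \<in> arcs P \<and> i < v \<and> v < k)"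

definition visible_maxima :: "nat set set \<Rightarrow> nat set" where
  "visible_maxima P = {v \<in> Max ` P. visible P v}"

definition rank :: "nat set \<Rightarrow> nat \<Rightarrow> nat" where
  "rank V v = card {u \<in> V. u \<le> v}"

lemma sum_rank:
  assumes "finite V"
  shows "(\<Sum>v\<in>V. G (rank V v)) = (\<Sum>i=1..card V. G i)"
  using assms
proof (induction V rule: finite_linorder_max_induct)
  case empty
  then show ?case by simp
next
  case (insert b V)
  have "rank (insert b V) v = rank V v" if "v \<in> V" for v
    unfolding rank_def using insert.hyps(2) that by (metis (lifting) insert_iff less_le_not_le order_trans)
  moreover have "rank (insert b V) b = Suc (card V)"
  proof -
    have "{u \<in> insert b V. u \<le> b} = insert b V"
      using insert.hyps(2) by auto
    then show ?thesis
      unfolding rank_def using insert.hyps by auto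
  qed
  moreover have "b \<notin> V"
    using insert.hyps(2) by blast
  ultimately have "(\<Sum>v\<in>insert b V. G (rank (insert b V) v)) = G (Suc (card V)) + (\<Sum>v\<in>V. G (rank V v))"
    using insert.hyps(1) by simp
  then show ?case
    using insert.IH insert.hyps(1) \<open>b \<notin> V\<close> by (simp add: add.commute)
qed

lemma sum_choose_last:
  "(\<Sum>i=1..Suc d. real (i - 1 choose h) * (if i = Suc d then y else x))
   = y * real (d choose h) + x * real (d choose Suc h)"
proof -
  have "(\<Sum>i=1..d. real (i - 1 choose h)) = real (d choose Suc h)"
  proof -
    have "(\<Sum>i=1..d. real (i - 1 choose h)) = (\<Sum>i<d. real (i choose h))"
      by (simp add: sum.atLeast1_atMost_eq)
    also have "\<dots> = real (d choose Suc h)"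
      by (cases d) (simp_all add: lessThan_Suc_atMost sum_choose_upper flip: of_nat_sum)
    finally show ?thesis .
  qed
  moreover have "(\<Sum>i=1..d. real (i - 1 choose h) * (if i = Suc d then y else x)) = x * (\<Sum>i=1..d. real (i - 1 choose h))"
    by (simp add: sum_distrib_left mult.commute)
  ultimately show ?thesis
    by simp
qed

lemma inj_on_Max_set_partition: "P \<in> set_partitions n \<Longrightarrow> inj_on Max P"
  by (rule inj_onI) (metis set_partitions_block(4) set_partition_block_eqI)

lemma visible_ge: "P \<in> set_partitions n \<Longrightarrow> n \<le> v \<Longrightarrow> visible P v"
  using arcs_set_partition_le by (fastforce simp: visible_def)

lemma noncrossing_insert_singleton: "noncrossing (insert {m} P) \<longleftrightarrow> noncrossing P"
  by (simp add: noncrossing_def)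

lemma visible_maxima_insert_singleton:
  assumes "P \<in> set_partitions n"
  shows "visible_maxima (insert {Suc n} P) = insert (Suc n) (visible_maxima P)" "Suc n \<notin> visible_maxima P"
proof -
  have "visible (insert {Suc n} P) = visible P"
    by (simp add: visible_def fun_eq_iff)
  then show "visible_maxima (insert {Suc n} P) = insert (Suc n) (visible_maxima P)"
    using visible_ge[OF assms, of "Suc n"] by (auto simp: visible_maxima_def)
  show "Suc n \<notin> visible_maxima P"
    using set_partitions_block(5)[OF assms] by (force simp: visible_maxima_def)
qed

lemma noncrossing_join_block:
  assumes P: "P \<in> set_partitions n" and B: "B \<in> P"
  shows "noncrossing (join_block (Suc n) P B) \<longleftrightarrow> noncrossing P \<and> visible P (Max B)"
proof -
  let ?a = "(Max B, Suc n)"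
  have below: "k \<le> n" if "(i, k) \<in> arcs P" for i k
    using arcs_set_partition_le[OF P that] by simp
  have "(\<exists>i j k l. (i, k) \<in> insert ?a (arcs P) \<and> (j, l) \<in> insert ?a (arcs P) \<and> i < j \<and> j < k \<and> k < l)
    \<longleftrightarrow> (\<exists>i j k l. (i, k) \<in> arcs P \<and> (j, l) \<in> arcs P \<and> i < j \<and> j < k \<and> k < l)
      \<or> (\<exists>i k. (i, k) \<in> arcs P \<and> i < Max B \<and> Max B < k)" (is "?cross \<longleftrightarrow> ?old \<or> ?over")
  proof
    assume ?cross
    then obtain i j k l where ik: "(i, k) \<in> insert ?a (arcs P)" and jl: "(j, l) \<in> insert ?a (arcs P)"
      and ord: "i < j" "j < k" "k < l"
      by blast
    have "l \<le> Suc n"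
      using jl below by fastforce
    then have "(i, k) \<in> arcs P"
      using ik ord by auto
    then show "?old \<or> ?over"
      using jl ord by blast
  next
    assume "?old \<or> ?over"
    then show ?cross
    proof
      assume ?over
      then obtain i k where "(i, k) \<in> arcs P" "i < Max B" "Max B < k"
        by blast
      then show ?cross
        using below[of i k] by (intro exI[of _ i] exI[of _ "Max B"] exI[of _ k] exI[of _ "Suc n"]) auto
    qed blast
  qed
  then show ?thesis
    unfolding noncrossing_def visible_def arcs_join_block_set_partition(1)[OF P B] by blast
qed

lemma visible_maxima_join_block:
  assumes P: "P \<in> set_partitions n" and B: "B \<in> P" and vis: "visible P (Max B)"
  shows "visible_maxima (join_block (Suc n) P B) = insert (Suc n) {v \<in> visible_maxima P. v < Max B}"
proof -
  have "visible (join_block (Suc n) P B) v \<longleftrightarrow> visible P v \<and> \<not> (Max B < v \<and> v < Suc n)" for v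
    unfolding visible_def arcs_join_block_set_partition(1)[OF P B] by auto
  moreover have "Max (insert (Suc n) B) = Suc n"
    using set_partitions_block(1,2,5)[OF P B] by (simp add: max_def del: Max_le_iff)
  then have "Max ` join_block (Suc n) P B = insert (Suc n) (Max ` (P - {B}))"
    by (simp add: join_block_def)
  moreover have "Max ` (P - {B}) = Max ` P - {Max B}"
    using inj_on_Max_set_partition[OF P] B by (simp add: inj_on_image_set_diff)
  moreover have "Max C \<le> n" if "C \<in> P" for C
    using set_partitions_block(5)[OF P that] .
  ultimately show ?thesis
    using visible_ge[OF P, of "Suc n"] vis by (auto simp: visible_maxima_def less_Suc_eq_le)
qed

lemma finite_visible_maxima: "P \<in> set_partitions n \<Longrightarrow> finite (visible_maxima P)"
  using set_partitionsD(1) by (simp add: visible_maxima_def)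

lemma card_visible_maxima_join_block:
  assumes P: "P \<in> set_partitions n" and B: "B \<in> P" and vis: "visible P (Max B)"
  shows "card (visible_maxima (join_block (Suc n) P B)) = rank (visible_maxima P) (Max B)"
proof -
  have "Max B \<in> visible_maxima P"
    using B vis by (simp add: visible_maxima_def)
  then have "{u \<in> visible_maxima P. u \<le> Max B} = insert (Max B) {v \<in> visible_maxima P. v < Max B}"
    by auto
  moreover have "Suc n \<notin> {v \<in> visible_maxima P. v < Max B}"
    using set_partitions_block(5)[OF P B] by simp
  ultimately show ?thesis
    unfolding visible_maxima_join_block[OF P B vis] rank_def using finite_visible_maxima[OF P] by simp
qed

lemma Suc_in_visible_maxima:
  assumes P: "P \<in> set_partitions (Suc n)"
  shows "Suc n \<in> visible_maxima P"
proof -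
  have "Suc n \<in> \<Union>P"
    using set_partitionsD(2)[OF P] by simp
  then obtain C where C: "C \<in> P" "Suc n \<in> C"
    by blast
  then have "Max C = Suc n"
    using set_partitions_block(1,5)[OF P C(1)] by (simp add: antisym)
  then show ?thesis
    using C(1) visible_ge[OF P, of "Suc n"] by (force simp: visible_maxima_def)
qed

lemma rank_visible_maxima_eq_card_iff:
  assumes P: "P \<in> set_partitions (Suc n)" and v: "v \<in> visible_maxima P"
  shows "rank (visible_maxima P) v = card (visible_maxima P) \<longleftrightarrow> v = Suc n"
proof -
  have le: "u \<le> Suc n" if "u \<in> visible_maxima P" for u
    using that set_partitions_block(5)[OF P] by (auto simp: visible_maxima_def)
  have "{u \<in> visible_maxima P. u \<le> v} = visible_maxima P \<longleftrightarrow> v = Suc n"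
    using le[OF v] le Suc_in_visible_maxima[OF P] by (auto intro: antisym)
  moreover have "{u \<in> visible_maxima P. u \<le> v} \<subseteq> visible_maxima P"
    by blast
  ultimately show ?thesis
    unfolding rank_def using finite_visible_maxima[OF P] by (metis card_subset_eq)
qed

text \<open>The largest element is always a visible maximum; level h chooses h of the others.\<close>
definition nc_weight :: "real \<Rightarrow> real \<Rightarrow> nat \<Rightarrow> nat set set \<Rightarrow> real" where
  "nc_weight x y h P =
     (if noncrossing P then real (card (visible_maxima P) - 1 choose h) * arcs_weight x y (arcs P) else 0)"

lemma sum_nc_weight_join_block:
  assumes P: "P \<in> set_partitions (Suc n)" and nc: "noncrossing P"
  defines "d \<equiv> card (visible_maxima P) - 1"
  shows "(\<Sum>B\<in>P. nc_weight x y h (join_block (Suc (Suc n)) P B))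
       = (y * real (d choose h) + x * real (d choose Suc h)) * arcs_weight x y (arcs P)"
proof -
  let ?V = "visible_maxima P" and ?w = "arcs_weight x y (arcs P)"
  let ?G = "\<lambda>v. real (rank ?V v - 1 choose h) * (if v = Suc n then y else x) * ?w"
  have "card ?V \<noteq> 0"
    using Suc_in_visible_maxima[OF P] finite_visible_maxima[OF P] by auto
  then have c: "card ?V = Suc d"
    unfolding d_def by simp
  have "nc_weight x y h (join_block (Suc (Suc n)) P B) = (if visible P (Max B) then ?G (Max B) else 0)"
    if B: "B \<in> P" for B
    using nc noncrossing_join_block[OF P B] card_visible_maxima_join_block[OF P B]
      arcs_join_block_set_partition[OF P B] arcs_weight_insert[OF finite_arcs_set_partition[OF P]]
    by (simp add: nc_weight_def)
  then have "(\<Sum>B\<in>P. nc_weight x y h (join_block (Suc (Suc n)) P B))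
      = (\<Sum>B\<in>P. if visible P (Max B) then ?G (Max B) else 0)"
    by (rule sum.cong[OF refl])
  also have "\<dots> = (\<Sum>B\<in>{B \<in> P. visible P (Max B)}. ?G (Max B))"
    by (rule sum.inter_filter[symmetric, OF set_partitionsD(1)[OF P]])
  also have "\<dots> = (\<Sum>v\<in>?V. ?G v)"
  proof -
    have "?V = Max ` {B \<in> P. visible P (Max B)}"
      by (auto simp: visible_maxima_def)
    moreover have "inj_on Max {B \<in> P. visible P (Max B)}"
      using inj_on_Max_set_partition[OF P] by (rule inj_on_subset) auto
    ultimately show ?thesis
      by (simp add: sum.reindex)
  qed
  also have "\<dots> = (\<Sum>v\<in>?V. real (rank ?V v - 1 choose h) * (if rank ?V v = Suc d then y else x)) * ?w"
    unfolding sum_distrib_right using rank_visible_maxima_eq_card_iff[OF P] c by (intro sum.cong) auto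
  also have "\<dots> = (y * real (d choose h) + x * real (d choose Suc h)) * ?w"
    using sum_rank[OF finite_visible_maxima[OF P], of "\<lambda>i. real (i - 1 choose h) * (if i = Suc d then y else x)"]
    unfolding c sum_choose_last by simp
  finally show ?thesis .
qed

lemma nc_weight_step:
  assumes P: "P \<in> set_partitions (Suc n)"
  shows "nc_weight x y h (insert {Suc (Suc n)} P) + (\<Sum>B\<in>P. nc_weight x y h (join_block (Suc (Suc n)) P B))
       = (if h = 0 then 0 else nc_weight x y (h - 1) P) + (y + 1) * nc_weight x y h P + x * nc_weight x y (Suc h) P"
proof -
  define d where "d = card (visible_maxima P) - 1"
  let ?w = "arcs_weight x y (arcs P)"
  have "card (visible_maxima P) \<noteq> 0"
    using Suc_in_visible_maxima[OF P] finite_visible_maxima[OF P] by auto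
  then have c: "card (visible_maxima P) = Suc d"
    unfolding d_def by simp
  have "nc_weight x y h (insert {Suc (Suc n)} P) = (if noncrossing P then real (Suc d choose h) * ?w else 0)"
    using visible_maxima_insert_singleton[OF P] finite_visible_maxima[OF P] c
    by (simp add: nc_weight_def noncrossing_insert_singleton)
  moreover have "(\<Sum>B\<in>P. nc_weight x y h (join_block (Suc (Suc n)) P B))
      = (if noncrossing P then (y * real (d choose h) + x * real (d choose Suc h)) * ?w else 0)"
    using sum_nc_weight_join_block[OF P, of x y h] noncrossing_join_block[OF P]
    unfolding d_def by (simp add: nc_weight_def)
  ultimately show ?thesis
    using binomial_Suc_if[of d h] c by (cases "h = 0") (simp_all add: nc_weight_def algebra_simps)
qed

lemma Cpoly_eq_sum_nc_weight: "Cpoly n x y = (\<Sum>P\<in>set_partitions n. nc_weight x y 0 P)"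
  unfolding Cpoly_def nc_partitions_def nc_weight_def arcs_weight_arcs
  by (simp only: binomial_n_0 of_nat_1 mult_1) (simp add: sum.inter_filter finite_set_partitions)

lemma Cpoly_eq_motzkin: "Cpoly (Suc n) x y = motzkin (\<lambda>_. y + 1) (\<lambda>_. x) n 0"
proof -
  have "(\<Sum>P\<in>set_partitions (1 + n). nc_weight x y h P) = motzkin (\<lambda>_. y + 1) (\<lambda>_. x) n h" for h
  proof (rule sum_set_partitions_eq_motzkin)
    have "visible_maxima {{1}} = {1}"
      by (simp add: visible_maxima_def visible_def)
    then show "(\<Sum>P\<in>set_partitions 1. nc_weight x y h P) = (if h = 0 then 1 else 0)" for h
      unfolding sum_set_partitions_1 by (simp add: nc_weight_def noncrossing_def arcs_weight_def)
  next
    fix m P h assume "1 \<le> m" and "P \<in> set_partitions m"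
    then show "nc_weight x y h (insert {Suc m} P) + (\<Sum>B\<in>P. nc_weight x y h (join_block (Suc m) P B))
        = (if h = 0 then 0 else nc_weight x y (h - 1) P) + (y + 1) * nc_weight x y h P + x * nc_weight x y (Suc h) P"
      using nc_weight_step[of P "m - 1" x y h] by simp
  qed
  from this[of 0] show ?thesis
    by (simp add: Cpoly_eq_sum_nc_weight)
qed

theorem corollary3p5:
  fixes n :: nat and x y :: real
  shows "((\<Sum>k=0..n. (-1) ^ (n - k) * real (n choose k) * (y + 1) ^ (n - k) * Bpoly (k + 1) x y)
           = Fe n x) \<and>
         ((\<Sum>k=0..n. (-1) ^ (n - k) * real (n choose k) * (y + 1) ^ (n - k) * Cpoly (k + 1) x y)
           = (if even n then x ^ (n div 2) * catalan (n div 2) else 0))"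
proof
  show "(\<Sum>k=0..n. (-1) ^ (n - k) * real (n choose k) * (y + 1) ^ (n - k) * Bpoly (k + 1) x y) = Fe n x"
    using motzkin_unshift[of n "y + 1" "\<lambda>h. x * real h" "\<lambda>h. x * real (Suc h)" 0]
    by (simp add: Bpoly_eq_motzkin Fe_eq_motzkin atLeast0AtMost)
  show "(\<Sum>k=0..n. (-1) ^ (n - k) * real (n choose k) * (y + 1) ^ (n - k) * Cpoly (k + 1) x y)
      = (if even n then x ^ (n div 2) * catalan (n div 2) else 0)"
    using motzkin_unshift[of n "y + 1" "\<lambda>_. 0" "\<lambda>_. x" 0]
    by (simp add: Cpoly_eq_motzkin motzkin_dyck_0 atLeast0AtMost)
qed

end
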